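(* There exist an open set $U\subseteq 2^\omega$ and a closed set $C\subseteq 2^\omega$ such that $\Phi(U)=\Phi(C)$ and this set is a complete $\boldsymbol{\Pi}^0_3$ set.
   Context: $2^\omega$ is the Cantor space with the product topology; for a finite binary sequence $s$, $N_s=\{x\in 2^\omega: s\subset x\}$. $\mu$ is the coin-tossing (Lebesgue) measure on $2^\omega$, i.e. the Borel probability measure with $\mu(N_s)=2^{-\mathrm{lh}(s)}$. For a $\mu$-measurable $A\subseteq 2^\omega$, $\Phi(A)=\{x\in 2^\omega: \lim_{n\to\infty}\mu(A\cap N_{x\restriction n})/\mu(N_{x\restriction n})=1\}$ (the set of points of density $1$ in $A$). $\boldsymbol{\Pi}^0_3$ denotes the class of $F_{\sigma\delta}$ sets, $\boldsymbol{\Sigma}^0_3$ the class of $G_{\delta\sigma}$ sets, $\boldsymbol{\Delta}^0_3=\boldsymbol{\Sigma}^0_3\cap\boldsymbol{\Pi}^0_3$. A set $X\subseteq 2^\omega$ is complete $\boldsymbol{\Pi}^0_3$ if $X\in\boldsymbol{\Pi}^0_3$ and every $\boldsymbol{\Pi}^0_3$ subset of $2^\omega$ is of the form $f^{-1}(X)$ for a continuous $f:2^\omega\to2^\omega$ (equivalently, $X\in\boldsymbol{\Pi}^0_3\setminus\boldsymbol{\Sigma}^0_3$). *)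

theory Defs
  imports "HOL-Analysis.Analysis" "HOL-Probability.Probability"
begin

definition cantor_top :: "(nat \<Rightarrow> bool) topology" where
  "cantor_top = product_topology (\<lambda>_. discrete_topology UNIV) UNIV"

definition nbhd :: "bool list \<Rightarrow> (nat \<Rightarrow> bool) set" where
  "nbhd s = {x. \<forall>i<length s. x i = s ! i}"

definition restr :: "(nat \<Rightarrow> bool) \<Rightarrow> nat \<Rightarrow> bool list" where
  "restr x n = map x [0..<n]"

definition coin_measure :: "(nat \<Rightarrow> bool) measure" where
  "coin_measure = PiM UNIV (\<lambda>_. measure_pmf (bernoulli_pmf (1/2)))"

text \<open>Points of density 1 (measure taken in the completion, i.e. for mu-measurable sets).\<close>
definition density_pts :: "(nat \<Rightarrow> bool) set \<Rightarrow> (nat \<Rightarrow> bool) set" where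
  "density_pts A = {x. (\<lambda>n. measure (completion coin_measure) (A \<inter> nbhd (restr x n))
        / measure (completion coin_measure) (nbhd (restr x n))) \<longlonglongrightarrow> 1}"

definition Pi03 :: "(nat \<Rightarrow> bool) set \<Rightarrow> bool" where
  "Pi03 X \<longleftrightarrow> (\<exists>F :: nat \<Rightarrow> nat \<Rightarrow> (nat \<Rightarrow> bool) set.
      (\<forall>n m. closedin cantor_top (F n m)) \<and> X = (\<Inter>n. \<Union>m. F n m))"

definition complete_Pi03 :: "(nat \<Rightarrow> bool) set \<Rightarrow> bool" where
  "complete_Pi03 X \<longleftrightarrow> Pi03 X \<and>
     (\<forall>Y. Pi03 Y \<longrightarrow> (\<exists>f. continuous_map cantor_top cantor_top f \<and> Y = f -` X))"

end

theory Submission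
  imports Defs
begin

(*
  Both sets are read off a deterministic automaton on binary words.  Its spine
  states Col j and Climb j k walk through the columns j = 0, 1, 2, ...  At Col j a 0
  skips to column j + 1, while a 1 starts a run: j further ones lead to Climb j 0
  (a 0 on the way falls into the sink of U), and there a 1 moves on to column j + 1
  whereas a 0 enters the gadget Gap (row j), whose part in the sink of V has
  relative measure 2^-(row j + 1); row j is the first coordinate of j under the
  pairing nat = nat \<times> nat.  U (resp. V) is the open set of sequences that reach
  the sink of U (resp. V), and C = -V is closed.

  (1) For every measurable A with U \<subseteq> A \<subseteq> C the relative measure of A at a node
      is that of U once the path has left the spine; along the spine the deficit
      is at most about 2^-j at column j but at least 2^-(row j + 2) at Climb j 0.
      So on a spine path the density tends to 1 iff each row contains only
      finitely many completed columns, and \<Phi>(A) = \<Phi>(U); in particular \<Phi>(U) = \<Phi>(C).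
  (2) \<Phi>(A) is \<Pi>^0_3 for every measurable A.
  (3) For closed sets F n i, x \<in> \<Union>i. F n i iff a "first hit" index computed from the
      prefixes of x changes only finitely often.  Recording these changes as the
      columns of row n of a continuously computed spine path reduces the \<Pi>^0_3 set
      \<Inter>n. \<Union>i. F n i to \<Phi>(U), so \<Phi>(U) is complete.
*)

lemma length_restr [simp]: "length (restr x n) = n"
  by (simp add: restr_def)

lemma nth_restr [simp]: "i < n \<Longrightarrow> restr x n ! i = x i"
  by (simp add: restr_def)

lemma restr_Suc: "restr x (Suc n) = restr x n @ [x n]"
  by (simp add: restr_def)

lemma restr_eq_iff: "restr y n = restr x n \<longleftrightarrow> (\<forall>i<n. y i = x i)"
  by (auto simp: restr_def)

lemma mem_nbhd: "y \<in> nbhd s \<longleftrightarrow> restr y (length s) = s"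
proof -
  have "restr y (length s) = s \<longleftrightarrow> (\<forall>i<length s. y i = s ! i)"
  proof
    assume "restr y (length s) = s"
    then show "\<forall>i<length s. y i = s ! i" by (metis nth_restr)
  next
    assume "\<forall>i<length s. y i = s ! i"
    then show "restr y (length s) = s" by (intro nth_equalityI) auto
  qed
  then show ?thesis by (simp add: nbhd_def)
qed

lemma mem_nbhd_restr: "y \<in> nbhd (restr x n) \<longleftrightarrow> restr y n = restr x n"
  by (simp add: mem_nbhd)

lemma nbhd_restr_mono: "k \<le> k' \<Longrightarrow> nbhd (restr x k') \<subseteq> nbhd (restr x k)"
  by (auto simp: mem_nbhd_restr restr_eq_iff)

lemma nbhd_split: "nbhd t = nbhd (t @ [False]) \<union> nbhd (t @ [True])"
  and nbhd_split_disjoint: "nbhd (t @ [False]) \<inter> nbhd (t @ [True]) = {}"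
proof -
  have "y \<in> nbhd (t @ [b]) \<longleftrightarrow> y \<in> nbhd t \<and> y (length t) = b" for y b
    by (simp add: mem_nbhd restr_Suc)
  then show "nbhd t = nbhd (t @ [False]) \<union> nbhd (t @ [True])"
    and "nbhd (t @ [False]) \<inter> nbhd (t @ [True]) = {}" by auto
qed

lemma topspace_cantor [simp]: "topspace cantor_top = UNIV"
  by (simp add: cantor_top_def)

lemma openin_cylinder: "openin cantor_top {x. P (restr x n)}"
  unfolding cantor_top_def openin_product_topology_alt
proof (intro ballI)
  fix x assume x: "x \<in> {x. P (restr x n)}"
  define U where "U = (\<lambda>i. if i < n then {x i} else (UNIV::bool set))"
  show "\<exists>U. finite {i \<in> UNIV. U i \<noteq> topspace (discrete_topology UNIV)} \<and>
             (\<forall>i\<in>UNIV. openin (discrete_topology UNIV) (U i)) \<and> x \<in> Pi\<^sub>E UNIV U \<and>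
             Pi\<^sub>E UNIV U \<subseteq> {x. P (restr x n)}"
  proof (intro exI[of _ U] conjI)
    show "finite {i \<in> UNIV. U i \<noteq> topspace (discrete_topology UNIV)}"
      by (rule finite_subset[of _ "{..<n}"]) (auto simp: U_def)
    show "\<forall>i\<in>UNIV. openin (discrete_topology UNIV) (U i)" by simp
    show "x \<in> Pi\<^sub>E UNIV U" by (auto simp: U_def PiE_iff)
    show "Pi\<^sub>E UNIV U \<subseteq> {x. P (restr x n)}"
    proof
      fix y assume "y \<in> Pi\<^sub>E UNIV U"
      then have "\<forall>i<n. y i = x i" by (metis (full_types) PiE_mem UNIV_I U_def singletonD)
      then have "restr y n = restr x n" by (simp add: restr_eq_iff)
      then show "y \<in> {x. P (restr x n)}" using x by simp
    qed
  qed
qed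

lemma closedin_cylinder: "closedin cantor_top {x. P (restr x n)}"
proof -
  have "topspace cantor_top - {x. P (restr x n)} = {x. \<not> P (restr x n)}" by auto
  then show ?thesis using openin_cylinder[of "\<lambda>s. \<not> P s" n] by (simp add: closedin_def)
qed

lemma openin_nbhd_restr_subset:
  assumes "openin cantor_top S" "x \<in> S"
  shows "\<exists>k. nbhd (restr x k) \<subseteq> S"
proof -
  obtain U :: "nat \<Rightarrow> bool set"
    where U0: "finite {i \<in> UNIV. U i \<noteq> topspace (discrete_topology UNIV)}"
      and U: "x \<in> Pi\<^sub>E UNIV U" "Pi\<^sub>E UNIV U \<subseteq> S"
    using assms unfolding cantor_top_def openin_product_topology_alt by blast
  have "finite {i. U i \<noteq> UNIV}" using U0 by simp
  then obtain k where k: "{i. U i \<noteq> UNIV} \<subseteq> {..<k}" using finite_nat_bounded by blast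
  have "nbhd (restr x k) \<subseteq> Pi\<^sub>E UNIV U"
  proof
    fix y assume "y \<in> nbhd (restr x k)"
    then have y: "\<forall>i<k. y i = x i" by (simp add: mem_nbhd_restr restr_eq_iff)
    have "y i \<in> U i" for i
    proof (cases "U i = UNIV")
      case False
      then have "i < k" using k by auto
      then show ?thesis using y U(1) by auto
    qed simp
    then show "y \<in> Pi\<^sub>E UNIV U" by auto
  qed
  then show ?thesis using U(2) by blast
qed

lemma closedin_avoids_nbhd_restr:
  assumes "closedin cantor_top S" "x \<notin> S"
  shows "\<exists>k. nbhd (restr x k) \<inter> S = {}"
proof -
  have "openin cantor_top (UNIV - S)" using assms(1) by (simp add: closedin_def)
  from openin_nbhd_restr_subset[OF this] assms(2) show ?thesis by blast
qed

lemma continuous_map_cantor_finitely_determined: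
  assumes "\<And>p. \<exists>N. \<forall>x x'. restr x N = restr x' N \<longrightarrow> f x p = f x' p"
  shows "continuous_map cantor_top cantor_top f"
proof -
  have "continuous_map cantor_top (discrete_topology UNIV) (\<lambda>x. f x p)" for p
    unfolding continuous_map_def
  proof (intro conjI allI impI)
    obtain N where N: "\<forall>x x'. restr x N = restr x' N \<longrightarrow> f x p = f x' p" using assms by blast
    show "(\<lambda>x. f x p) \<in> topspace cantor_top \<rightarrow> topspace (discrete_topology UNIV)" by simp
    fix V :: "bool set"
    have "{x \<in> topspace cantor_top. f x p \<in> V} = {x. \<exists>x'. restr x' N = restr x N \<and> f x' p \<in> V}"
    proof (intro set_eqI iffI)
      fix x assume "x \<in> {x. \<exists>x'. restr x' N = restr x N \<and> f x' p \<in> V}"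
      then obtain x' where x': "restr x' N = restr x N" "f x' p \<in> V" by blast
      then have "f x' p = f x p" using N by blast
      then show "x \<in> {x \<in> topspace cantor_top. f x p \<in> V}" using x' by simp
    qed blast
    then show "openin cantor_top {x \<in> topspace cantor_top. f x p \<in> V}"
      using openin_cylinder[of "\<lambda>s. \<exists>x'. restr x' N = s \<and> f x' p \<in> V"] by simp
  qed
  then show ?thesis
    by (simp add: cantor_top_def continuous_map_componentwise_UNIV)
qed

section \<open>The coin-tossing measure and relative densities\<close>

lemma space_coin [simp]: "space coin_measure = UNIV"
  by (simp add: coin_measure_def space_PiM)

interpretation coin: prob_space coin_measure
  unfolding coin_measure_def by (rule prob_space_PiM) (simp add: prob_space_measure_pmf)

lemma nbhd_sets: "nbhd s \<in> sets coin_measure"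
proof -
  have "nbhd s = (\<Inter>i\<in>{..<length s}. {x\<in>space coin_measure. x i = s ! i}) \<inter> space coin_measure"
    by (auto simp: nbhd_def)
  also have "\<dots> \<in> sets coin_measure" unfolding coin_measure_def
    by measurable
  finally show ?thesis .
qed

lemma measure_nbhd: "measure coin_measure (nbhd s) = (1/2) ^ length s"
proof -
  let ?M = "\<lambda>_::nat. measure_pmf (bernoulli_pmf (1/2))"
  have eq: "nbhd s = prod_emb UNIV ?M {..<length s} (Pi\<^sub>E {..<length s} (\<lambda>i. {s ! i}))"
    by (auto simp: nbhd_def prod_emb_def PiE_iff restrict_def extensional_def)
  have "emeasure coin_measure (nbhd s) = (\<Prod>i\<in>{..<length s}. emeasure (?M i) {s ! i})"
    unfolding eq coin_measure_def
    by (rule emeasure_PiM_emb) (auto simp: prob_space_measure_pmf)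
  also have "\<dots> = (\<Prod>i\<in>{..<length s}. ennreal (1/2))"
    by (intro prod.cong refl) (simp add: emeasure_pmf_single)
  also have "\<dots> = ennreal ((1/2) ^ length s)" by (subst prod_ennreal) auto
  finally show ?thesis by (simp add: measure_def)
qed

lemma cylinder_sets: "{x. P (restr x n)} \<in> sets coin_measure"
proof -
  have "{x. P (restr x n)} = (\<Union>s\<in>{s. length s = n \<and> P s}. nbhd s)"
    by (auto simp: mem_nbhd)
  also have "\<dots> \<in> sets coin_measure"
    by (rule sets.countable_UN'')
       (auto intro: countable_subset[OF subset_UNIV countableI_type] nbhd_sets)
  finally show ?thesis .
qed

definition rel_dens :: "(nat \<Rightarrow> bool) set \<Rightarrow> bool list \<Rightarrow> real" where
  "rel_dens A t = measure coin_measure (A \<inter> nbhd t) / measure coin_measure (nbhd t)"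

lemma rel_dens_split:
  assumes A: "A \<in> sets coin_measure"
  shows "rel_dens A t = (rel_dens A (t @ [False]) + rel_dens A (t @ [True])) / 2"
proof -
  have "A \<inter> nbhd t = (A \<inter> nbhd (t @ [False])) \<union> (A \<inter> nbhd (t @ [True]))"
    using nbhd_split[of t] by auto
  moreover have "measure coin_measure ((A \<inter> nbhd (t @ [False])) \<union> (A \<inter> nbhd (t @ [True]))) =
      measure coin_measure (A \<inter> nbhd (t @ [False])) + measure coin_measure (A \<inter> nbhd (t @ [True]))"
    by (rule coin.finite_measure_Union) (use nbhd_split_disjoint[of t] A nbhd_sets in auto)
  ultimately show ?thesis
    unfolding rel_dens_def measure_nbhd by (simp add: field_simps)
qed

lemma rel_dens_nonneg: "0 \<le> rel_dens A t"
  by (simp add: rel_dens_def measure_nbhd)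

lemma rel_dens_le_1: "rel_dens A t \<le> 1"
proof -
  have "measure coin_measure (A \<inter> nbhd t) \<le> measure coin_measure (nbhd t)"
    by (rule coin.finite_measure_mono) (auto simp: nbhd_sets)
  then show ?thesis by (simp add: rel_dens_def measure_nbhd)
qed

lemma rel_dens_full: "nbhd t \<subseteq> A \<Longrightarrow> rel_dens A t = 1"
  by (simp add: rel_dens_def measure_nbhd Int_absorb1)

lemma rel_dens_empty: "A \<inter> nbhd t = {} \<Longrightarrow> rel_dens A t = 0"
  by (simp add: rel_dens_def)

lemma density_pts_rel_dens:
  assumes "A \<in> sets coin_measure"
  shows "density_pts A = {x. (\<lambda>n. rel_dens A (restr x n)) \<longlonglongrightarrow> 1}"
proof -
  have "measure (completion coin_measure) (A \<inter> nbhd t) = measure coin_measure (A \<inter> nbhd t)"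
    "measure (completion coin_measure) (nbhd t) = measure coin_measure (nbhd t)" for t
    using assms nbhd_sets by (auto intro!: measure_completion)
  then show ?thesis unfolding density_pts_def rel_dens_def by simp
qed

lemma tendsto_1_from_below_iff:
  assumes "\<And>n. X n \<le> (1::real)"
  shows "X \<longlonglongrightarrow> 1 \<longleftrightarrow> (\<forall>k. \<exists>N. \<forall>n\<ge>N. 1 - 1 / real (Suc k) \<le> X n)"
proof
  assume lim: "X \<longlonglongrightarrow> 1"
  show "\<forall>k. \<exists>N. \<forall>n\<ge>N. 1 - 1 / real (Suc k) \<le> X n"
  proof
    fix k
    have "0 < 1 / real (Suc k)" by simp
    from LIMSEQ_D[OF lim this] obtain N where "\<forall>n\<ge>N. norm (X n - 1) < 1 / real (Suc k)"
      by blast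
    then show "\<exists>N. \<forall>n\<ge>N. 1 - 1 / real (Suc k) \<le> X n"
      by (intro exI[of _ N]) (auto simp: abs_if split: if_splits)
  qed
next
  assume h: "\<forall>k. \<exists>N. \<forall>n\<ge>N. 1 - 1 / real (Suc k) \<le> X n"
  show "X \<longlonglongrightarrow> 1"
  proof (rule LIMSEQ_I)
    fix r :: real assume "0 < r"
    then obtain k where k: "inverse (real (Suc k)) < r" using reals_Archimedean by blast
    obtain N where N: "\<forall>n\<ge>N. 1 - 1 / real (Suc k) \<le> X n" using h by blast
    have "norm (X n - 1) < r" if "N \<le> n" for n
    proof -
      have "1 - 1 / real (Suc k) \<le> X n" using N that by blast
      then show ?thesis using assms[of n] k by (simp add: inverse_eq_divide)
    qed
    then show "\<exists>no. \<forall>n\<ge>no. norm (X n - 1) < r" by blast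
  qed
qed

text \<open>\<Phi>(A) is always \<Pi>^0_3: x \<in> \<Phi>(A) iff \<forall>k \<exists>N \<forall>n \<ge> N, rel_dens A (x|n) \<ge> 1 - 1/(k+1).\<close>
lemma Pi03_density_pts:
  assumes A: "A \<in> sets coin_measure"
  shows "Pi03 (density_pts A)"
  unfolding Pi03_def
proof (intro exI conjI allI)
  define F where "F k N = {x. \<forall>n\<ge>N. 1 - 1 / real (Suc k) \<le> rel_dens A (restr x n)}"
    for k N
  show "closedin cantor_top (F k N)" for k N
  proof -
    have "F k N = (\<Inter>n\<in>{N..}. {x. 1 - 1 / real (Suc k) \<le> rel_dens A (restr x n)})"
      by (auto simp: F_def)
    then show ?thesis by (auto intro: closedin_INT closedin_cylinder)
  qed
  show "density_pts A = (\<Inter>k. \<Union>N. F k N)"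
    unfolding density_pts_rel_dens[OF A] F_def
    using tendsto_1_from_below_iff[of "\<lambda>n. rel_dens A (restr _ n)", OF rel_dens_le_1]
    by (simp add: set_eq_iff)
qed

section \<open>The automaton\<close>

text \<open>Col j: waiting at column j; Climb j k: inside the run of column j with k more ones
  to go; Gap k: the gadget below a completed column; SinkU, SinkV: absorbing states
  of U and of V.\<close>
datatype state = Col nat | Climb nat nat | Gap nat | SinkU | SinkV

definition row :: "nat \<Rightarrow> nat" where "row j = fst (prod_decode j)"

fun step :: "state \<Rightarrow> bool \<Rightarrow> state" where
  "step (Col j) b = (if b then Climb j j else Col (Suc j))"
| "step (Climb j (Suc k)) b = (if b then Climb j k else SinkU)"
| "step (Climb j 0) b = (if b then Col (Suc j) else Gap (row j))"
| "step (Gap (Suc k)) b = (if b then Gap k else SinkU)"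
| "step (Gap 0) b = (if b then SinkV else SinkU)"
| "step SinkU b = SinkU"
| "step SinkV b = SinkV"

definition run_state :: "bool list \<Rightarrow> state" where "run_state s = foldl step (Col 0) s"

lemma run_state_snoc: "run_state (s @ [b]) = step (run_state s) b"
  by (simp add: run_state_def)

lemma run_state_restr_0: "run_state (restr x 0) = Col 0"
  by (simp add: restr_def run_state_def)

lemma run_state_restr_Suc: "run_state (restr x (Suc p)) = step (run_state (restr x p)) (x p)"
  by (simp add: restr_Suc run_state_snoc)

fun on_spine :: "state \<Rightarrow> bool" where
  "on_spine (Col j) = True" | "on_spine (Climb j k) = True" | "on_spine _ = False"

fun column :: "state \<Rightarrow> nat" where
  "column (Col j) = j" | "column (Climb j k) = j" | "column _ = 0"

lemma off_spine_step: "\<not> on_spine q \<Longrightarrow> \<not> on_spine (step q b)"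
  by (induction q b rule: step.induct) auto

lemma column_step_mono: "on_spine q \<Longrightarrow> on_spine (step q b) \<Longrightarrow> column q \<le> column (step q b)"
  by (induction q b rule: step.induct) auto

lemma column_step_le: "column (step q b) \<le> Suc (column q)"
  by (induction q b rule: step.induct) auto

lemma off_spine_after:
  assumes "\<not> on_spine (run_state (restr x p0))" "p0 \<le> p"
  shows "\<not> on_spine (run_state (restr x p))"
  using assms(2)
proof (induction p rule: dec_induct)
  case base then show ?case using assms(1) .
next
  case (step p) then show ?case using off_spine_step by (simp add: run_state_restr_Suc)
qed

lemma sink_after:
  assumes "run_state (restr x p0) = q" "q \<in> {SinkU, SinkV}" "p0 \<le> p"
  shows "run_state (restr x p) = q"
  using assms(3)
proof (induction p rule: dec_induct)
  case base then show ?case using assms(1) .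
next
  case (step p) then show ?case using assms(2) by (auto simp: run_state_restr_Suc)
qed

definition Uset :: "(nat \<Rightarrow> bool) set" where "Uset = {x. \<exists>n. run_state (restr x n) = SinkU}"
definition Vset :: "(nat \<Rightarrow> bool) set" where "Vset = {x. \<exists>n. run_state (restr x n) = SinkV}"
definition Cset :: "(nat \<Rightarrow> bool) set" where "Cset = - Vset"

lemma Uset_open: "openin cantor_top Uset"
proof -
  have "Uset = (\<Union>n. {x. run_state (restr x n) = SinkU})" by (auto simp: Uset_def)
  moreover have "openin cantor_top (\<Union>n. {x. run_state (restr x n) = SinkU})"
    by (intro openin_Union) (auto intro: openin_cylinder)
  ultimately show ?thesis by simp
qed

lemma Vset_open: "openin cantor_top Vset"
proof -
  have "Vset = (\<Union>n. {x. run_state (restr x n) = SinkV})" by (auto simp: Vset_def)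
  moreover have "openin cantor_top (\<Union>n. {x. run_state (restr x n) = SinkV})"
    by (intro openin_Union) (auto intro: openin_cylinder)
  ultimately show ?thesis by simp
qed

lemma Cset_closed: "closedin cantor_top Cset"
  unfolding closedin_def Cset_def using Vset_open by (simp add: Compl_eq_Diff_UNIV double_diff)

lemma Uset_sets: "Uset \<in> sets coin_measure"
proof -
  have "Uset = (\<Union>n. {x. run_state (restr x n) = SinkU})" by (auto simp: Uset_def)
  also have "\<dots> \<in> sets coin_measure" by (intro sets.countable_UN'') (auto intro: cylinder_sets)
  finally show ?thesis .
qed

lemma Cset_sets: "Cset \<in> sets coin_measure"
proof -
  have "Vset = (\<Union>n. {x. run_state (restr x n) = SinkV})" by (auto simp: Vset_def)
  also have "\<dots> \<in> sets coin_measure" by (intro sets.countable_UN'') (auto intro: cylinder_sets)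
  finally have "Vset \<in> sets coin_measure" .
  from sets.compl_sets[OF this] show ?thesis by (simp add: Cset_def Compl_eq_Diff_UNIV)
qed

lemma Uset_subset_Cset: "Uset \<subseteq> Cset"
proof
  fix x assume "x \<in> Uset"
  then obtain n where n: "run_state (restr x n) = SinkU" by (auto simp: Uset_def)
  have "run_state (restr x m) \<noteq> SinkV" for m
    using sink_after[OF n, of "max n m"] sink_after[of x m SinkV "max n m"] by auto
  then show "x \<in> Cset" by (auto simp: Cset_def Vset_def)
qed

lemma nbhd_SinkU: "run_state t = SinkU \<Longrightarrow> nbhd t \<subseteq> Uset"
  by (auto simp: Uset_def mem_nbhd intro!: exI[of _ "length t"])

lemma nbhd_SinkV: "run_state t = SinkV \<Longrightarrow> nbhd t \<subseteq> Vset"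
  by (auto simp: Vset_def mem_nbhd intro!: exI[of _ "length t"])

section \<open>Relative densities of sets between U and C\<close>

text \<open>Every measurable A with U \<subseteq> A \<subseteq> C has the same relative measures at all nodes
  whose state is off the spine, and the same estimates along the spine.\<close>
locale between =
  fixes A :: "(nat \<Rightarrow> bool) set"
  assumes U_subset: "Uset \<subseteq> A" and subset_C: "A \<subseteq> Cset" and A_sets: "A \<in> sets coin_measure"
begin

lemma rel_dens_mean: "rel_dens A t = (rel_dens A (t @ [False]) + rel_dens A (t @ [True])) / 2"
  by (rule rel_dens_split[OF A_sets])

lemma deficit_split:
  "1 - rel_dens A t = ((1 - rel_dens A (t @ [False])) + (1 - rel_dens A (t @ [True]))) / 2"
  using rel_dens_mean[of t] by simp

lemma rel_dens_SinkU: "run_state t = SinkU \<Longrightarrow> rel_dens A t = 1"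
  using nbhd_SinkU U_subset by (intro rel_dens_full) auto

lemma rel_dens_SinkV: "run_state t = SinkV \<Longrightarrow> rel_dens A t = 0"
  using nbhd_SinkV subset_C by (intro rel_dens_empty) (auto simp: Cset_def)

text \<open>Below Gap k the 0-branches lie in U and the final 1-branch in V.\<close>
lemma rel_dens_Gap: "run_state t = Gap k \<Longrightarrow> rel_dens A t = 1 - (1/2) ^ Suc k"
proof (induction k arbitrary: t)
  case 0
  then show ?case using rel_dens_mean[of t] rel_dens_SinkU[of "t @ [False]"] rel_dens_SinkV[of "t @ [True]"]
    by (simp add: run_state_snoc)
next
  case (Suc k)
  then show ?case using rel_dens_mean[of t] rel_dens_SinkU[of "t @ [False]"] Suc.IH[of "t @ [True]"]
    by (simp add: run_state_snoc field_simps)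
qed

text \<open>Inside a run of ones the 0-branches lie in U, so the deficit halves at each step.\<close>
lemma deficit_Climb_run: "run_state t = Climb j k \<Longrightarrow> 1 - rel_dens A t \<le> (1/2) ^ k"
proof (induction k arbitrary: t)
  case 0
  then show ?case using rel_dens_nonneg[of A t] by simp
next
  case (Suc k)
  have "1 - rel_dens A (t @ [True]) \<le> (1/2) ^ k" using Suc by (simp add: run_state_snoc)
  moreover have "rel_dens A (t @ [False]) = 1" using Suc.prems rel_dens_SinkU
    by (simp add: run_state_snoc)
  ultimately show ?case using deficit_split[of t] by simp
qed

text \<open>At Col j the 0-branch is Col (j + 1) and the 1-branch a run of length j; unfolding m
  levels of columns gives the deficit bound up to an error 2^-m.\<close>
lemma deficit_Col_approx: "run_state t = Col j \<Longrightarrow> 1 - rel_dens A t \<le> (1/2) ^ m + (1/2) ^ j"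
proof (induction m arbitrary: t j)
  case 0
  have "1 - rel_dens A t \<le> 1" using rel_dens_nonneg[of A t] by simp
  also have "\<dots> \<le> (1/2) ^ 0 + (1/2) ^ j" by simp
  finally show ?case .
next
  case (Suc m)
  have "1 - rel_dens A (t @ [False]) \<le> (1/2) ^ m + (1/2) ^ Suc j"
    using Suc.IH[of "t @ [False]" "Suc j"] Suc.prems by (simp add: run_state_snoc)
  moreover have "1 - rel_dens A (t @ [True]) \<le> (1/2) ^ j"
    using deficit_Climb_run[of "t @ [True]" j j] Suc.prems by (simp add: run_state_snoc)
  ultimately have "1 - rel_dens A t \<le> ((1/2) ^ m + (1/2) ^ Suc j + (1/2) ^ j) / 2"
    using deficit_split[of t] by simp
  also have "\<dots> \<le> (1/2) ^ Suc m + (1/2) ^ j" by simp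
  finally show ?case .
qed

lemma deficit_Col: "run_state t = Col j \<Longrightarrow> 1 - rel_dens A t \<le> (1/2) ^ j"
proof (rule ccontr)
  assume s: "run_state t = Col j" and "\<not> 1 - rel_dens A t \<le> (1/2) ^ j"
  then obtain m where "(1/2::real) ^ m < 1 - rel_dens A t - (1/2) ^ j"
    using real_arch_pow_inv[of "1 - rel_dens A t - (1/2) ^ j" "1/2"] by auto
  then show False using deficit_Col_approx[OF s, of m] by simp
qed

lemma deficit_Climb:
  "run_state t = Climb j k \<Longrightarrow> 1 - rel_dens A t \<le> ((1/2) ^ Suc (row j) + (1/2) ^ Suc j) / 2"
proof (induction k arbitrary: t)
  case 0
  have "1 - rel_dens A (t @ [False]) = (1/2) ^ Suc (row j)"
    using rel_dens_Gap[of "t @ [False]" "row j"] 0 by (simp add: run_state_snoc)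
  moreover have "1 - rel_dens A (t @ [True]) \<le> (1/2) ^ Suc j"
    using deficit_Col[of "t @ [True]" "Suc j"] 0 by (simp add: run_state_snoc)
  ultimately show ?case using deficit_split[of t] by simp
next
  case (Suc k)
  have "rel_dens A (t @ [False]) = 1"
    using Suc.prems rel_dens_SinkU by (simp add: run_state_snoc)
  then have "1 - rel_dens A t = (1 - rel_dens A (t @ [True])) / 2"
    using deficit_split[of t] by simp
  also have "\<dots> \<le> ((1/2) ^ Suc (row j) + (1/2) ^ Suc j) / 2 / 2"
  proof (rule divide_right_mono)
    show "1 - rel_dens A (t @ [True]) \<le> ((1/2) ^ Suc (row j) + (1/2) ^ Suc j) / 2"
      using Suc.IH[of "t @ [True]"] Suc.prems by (simp add: run_state_snoc)
  qed simp
  also have "\<dots> \<le> ((1/2) ^ Suc (row j) + (1/2) ^ Suc j) / 2" by simp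
  finally show ?case .
qed

lemma deficit_Climb_0_lower: "run_state t = Climb j 0 \<Longrightarrow> (1/2) ^ Suc (row j) / 2 \<le> 1 - rel_dens A t"
proof -
  assume s: "run_state t = Climb j 0"
  have "1 - rel_dens A (t @ [False]) = (1/2) ^ Suc (row j)"
    using rel_dens_Gap[of "t @ [False]" "row j"] s by (simp add: run_state_snoc)
  then show ?thesis using deficit_split[of t] rel_dens_le_1[of A "t @ [True]"] by simp
qed

end

interpretation between_U: between Uset
  using Uset_subset_Cset Uset_sets by unfold_locales auto

lemma rel_dens_off_spine:
  assumes "between A" "\<not> on_spine (run_state t)"
  shows "rel_dens A t = rel_dens Uset t"
  using assms(2)
  by (cases "run_state t")
     (auto simp: between.rel_dens_SinkU[OF assms(1)] between.rel_dens_SinkV[OF assms(1)]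
       between.rel_dens_Gap[OF assms(1)] between_U.rel_dens_SinkU between_U.rel_dens_SinkV
       between_U.rel_dens_Gap)

definition completed :: "(nat \<Rightarrow> bool) \<Rightarrow> nat set" where
  "completed x = {j. \<exists>p. run_state (restr x p) = Climb j 0}"

definition rows_finite :: "(nat \<Rightarrow> bool) \<Rightarrow> bool" where
  "rows_finite x \<longleftrightarrow> (\<forall>n. finite {j \<in> completed x. row j = n})"

context
  fixes x :: "nat \<Rightarrow> bool"
  assumes spine: "\<forall>p. on_spine (run_state (restr x p))"
begin

lemma spine_cases:
  obtains j where "run_state (restr x p) = Col j" | j k where "run_state (restr x p) = Climb j k"
  using spine[rule_format, of p] by (cases "run_state (restr x p)") auto

lemma Climb_completes:
  "run_state (restr x p) = Climb j k \<Longrightarrow> \<exists>p'\<ge>p. run_state (restr x p') = Climb j 0"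
proof (induction k arbitrary: p)
  case 0 then show ?case by auto
next
  case (Suc k)
  have "on_spine (run_state (restr x (Suc p)))" using spine by blast
  then have "run_state (restr x (Suc p)) = Climb j k"
    using Suc.prems by (cases "x p") (auto simp: run_state_restr_Suc)
  from Suc.IH[OF this] show ?case by (blast dest: Suc_leD)
qed

lemma Col_advances: "run_state (restr x p) = Col j \<Longrightarrow> \<exists>p'. run_state (restr x p') = Col (Suc j)"
proof (cases "x p")
  case True
  assume "run_state (restr x p) = Col j"
  with True have "run_state (restr x (Suc p)) = Climb j j" by (simp add: run_state_restr_Suc)
  from Climb_completes[OF this] obtain p' where p': "run_state (restr x p') = Climb j 0" by blast
  have "on_spine (run_state (restr x (Suc p')))" using spine by blast
  then have "x p'" using p' by (cases "x p'") (auto simp: run_state_restr_Suc)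
  with p' have "run_state (restr x (Suc p')) = Col (Suc j)" by (simp add: run_state_restr_Suc)
  then show ?thesis by blast
next
  case False
  assume "run_state (restr x p) = Col j"
  with False have "run_state (restr x (Suc p)) = Col (Suc j)" by (simp add: run_state_restr_Suc)
  then show ?thesis by blast
qed

lemma Col_reached: "\<exists>p. run_state (restr x p) = Col j"
  by (induction j) (use run_state_restr_0 Col_advances in blast)+

lemma column_eventually_ge: "\<exists>P. \<forall>p\<ge>P. m \<le> column (run_state (restr x p))"
proof -
  have "column (run_state (restr x p)) \<le> column (run_state (restr x (Suc p)))" for p
  proof -
    have "on_spine (step (run_state (restr x p)) (x p))"
      using spine by (metis run_state_restr_Suc)
    then show ?thesis using column_step_mono spine by (simp add: run_state_restr_Suc)
  qed
  then have "incseq (\<lambda>p. column (run_state (restr x p)))" by (rule incseq_SucI)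
  moreover obtain P where "run_state (restr x P) = Col m" using Col_reached by blast
  ultimately show ?thesis by (metis column.simps(1) incseq_def)
qed

end

context between
begin

text \<open>A completed column in row n costs a deficit of 2^-(n+2); so density 1 forces each
  row to be completed only finitely often.\<close>
lemma density_imp_rows_finite:
  assumes lim: "(\<lambda>p. rel_dens A (restr x p)) \<longlonglongrightarrow> 1"
  shows "rows_finite x"
  unfolding rows_finite_def
proof
  fix n
  have "0 < (1/2::real) ^ Suc n / 2" by simp
  from LIMSEQ_D[OF lim this] obtain P
    where P: "\<forall>p\<ge>P. norm (rel_dens A (restr x p) - 1) < (1/2) ^ Suc n / 2" by blast
  have "{j \<in> completed x. row j = n} \<subseteq> (\<lambda>p. column (run_state (restr x p))) ` {..<P}"
  proof
    fix j assume j: "j \<in> {j \<in> completed x. row j = n}"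
    then obtain p where p: "run_state (restr x p) = Climb j 0" by (auto simp: completed_def)
    have "\<not> norm (rel_dens A (restr x p) - 1) < (1/2) ^ Suc n / 2"
      using deficit_Climb_0_lower[OF p] rel_dens_le_1[of A "restr x p"] j by simp
    then have "p < P" using P by (meson not_le)
    then show "j \<in> (\<lambda>p. column (run_state (restr x p))) ` {..<P}"
      using p by (auto intro!: image_eqI[of _ _ p])
  qed
  then show "finite {j \<in> completed x. row j = n}" using finite_subset by blast
qed

text \<open>Conversely, late along a spine path the column is large and, if only finitely many
  columns of each row are completed, so is the row of every run still in progress.\<close>
lemma rows_finite_imp_density:
  assumes spine: "\<forall>p. on_spine (run_state (restr x p))" and fin: "rows_finite x"
  shows "(\<lambda>p. rel_dens A (restr x p)) \<longlonglongrightarrow> 1"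
proof (rule LIMSEQ_I)
  fix r :: real assume r: "0 < r"
  obtain N where N: "(1/2::real) ^ N < r" using real_arch_pow_inv[OF r, of "1/2"] by auto
  have "{j \<in> completed x. row j \<le> N} \<subseteq> (\<Union>n\<in>{..N}. {j \<in> completed x. row j = n})" by auto
  moreover have "finite (\<Union>n\<in>{..N}. {j \<in> completed x. row j = n})"
    using fin by (auto simp: rows_finite_def)
  ultimately obtain K where K: "{j \<in> completed x. row j \<le> N} \<subseteq> {..<K}"
    using finite_nat_bounded finite_subset by meson
  obtain P where P: "\<forall>p\<ge>P. max K N \<le> column (run_state (restr x p))"
    using column_eventually_ge[OF spine] by blast
  have half_pow: "(1/2::real) ^ i \<le> (1/2) ^ N" if "N \<le> i" for i
    using that by (intro power_decreasing) auto
  have "1 - rel_dens A (restr x p) \<le> (1/2) ^ N" if "P \<le> p" for p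
  proof (cases rule: spine_cases[OF spine, of p])
    case (1 j)
    then have "N \<le> j" using P[rule_format, OF that] by simp
    then show ?thesis using deficit_Col[OF 1] half_pow[of j] by linarith
  next
    case (2 j k)
    then have jK: "K \<le> j" "N \<le> j" using P[rule_format, OF that] by simp_all
    have "j \<in> completed x" using Climb_completes[OF spine 2] by (auto simp: completed_def)
    then have "N < row j" using K jK by force
    then show ?thesis using deficit_Climb[OF 2] half_pow[of "Suc (row j)"] half_pow[of "Suc j"] jK
      by simp
  qed
  moreover have "norm (rel_dens A (restr x p) - 1) = 1 - rel_dens A (restr x p)" for p
    using rel_dens_le_1[of A "restr x p"] by simp
  ultimately show "\<exists>P. \<forall>p\<ge>P. norm (rel_dens A (restr x p) - 1) < r"
    using N by (metis order_le_less_trans)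
qed

lemma density_iff_rows_finite:
  assumes "\<forall>p. on_spine (run_state (restr x p))"
  shows "(\<lambda>p. rel_dens A (restr x p)) \<longlonglongrightarrow> 1 \<longleftrightarrow> rows_finite x"
  using density_imp_rows_finite rows_finite_imp_density assms by blast

end

text \<open>Hence all sets between U and C have the same points of density 1: paths leaving the
  spine see identical relative measures from then on, and spine paths are decided by
  rows_finite alone.\<close>
lemma density_pts_between:
  assumes "between A"
  shows "density_pts A = density_pts Uset"
proof -
  have "(\<lambda>n. rel_dens A (restr x n)) \<longlonglongrightarrow> 1 \<longleftrightarrow> (\<lambda>n. rel_dens Uset (restr x n)) \<longlonglongrightarrow> 1" for x
  proof (cases "\<forall>p. on_spine (run_state (restr x p))")
    case True
    then show ?thesis
      using between.density_iff_rows_finite[OF assms] between_U.density_iff_rows_finite by blast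
  next
    case False
    then obtain p0 where "\<not> on_spine (run_state (restr x p0))" by blast
    then have "\<forall>p\<ge>p0. rel_dens A (restr x p) = rel_dens Uset (restr x p)"
      using off_spine_after rel_dens_off_spine[OF assms] by blast
    then show ?thesis
      by (intro tendsto_cong) (auto simp: eventually_sequentially)
  qed
  then show ?thesis
    using density_pts_rel_dens[OF between.A_sets[OF assms]] density_pts_rel_dens[OF Uset_sets]
    by auto
qed

lemma density_pts_Uset_Cset: "density_pts Uset = density_pts Cset"
proof -
  have "between Cset" using Uset_subset_Cset Cset_sets by unfold_locales auto
  from density_pts_between[OF this] show ?thesis by simp
qed

section \<open>Spine paths with prescribed completed columns\<close>

definition choose_bit :: "(nat \<Rightarrow> bool) \<Rightarrow> state \<Rightarrow> bool" where
  "choose_bit b q = (case q of Col j \<Rightarrow> b j | _ \<Rightarrow> True)"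

primrec guided_state :: "(nat \<Rightarrow> bool) \<Rightarrow> nat \<Rightarrow> state" where
  "guided_state b 0 = Col 0"
| "guided_state b (Suc p) = step (guided_state b p) (choose_bit b (guided_state b p))"

definition spine_path :: "(nat \<Rightarrow> bool) \<Rightarrow> nat \<Rightarrow> bool" where
  "spine_path b p = choose_bit b (guided_state b p)"

lemma run_state_spine_path: "run_state (restr (spine_path b) p) = guided_state b p"
  by (induction p) (simp_all add: run_state_restr_0 run_state_restr_Suc spine_path_def)

lemma step_Climb_True: "step (Climb j k) True = (case k of 0 \<Rightarrow> Col (Suc j) | Suc k' \<Rightarrow> Climb j k')"
  by (cases k) auto

lemma on_spine_step_choose_bit: "on_spine q \<Longrightarrow> on_spine (step q (choose_bit b q))"
  by (cases q) (auto simp: choose_bit_def step_Climb_True split: nat.split)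

lemma guided_state_on_spine: "on_spine (guided_state b p)"
  by (induction p) (simp_all add: on_spine_step_choose_bit)

lemma spine_path_on_spine: "\<forall>p. on_spine (run_state (restr (spine_path b) p))"
  by (simp add: run_state_spine_path guided_state_on_spine)

lemma step_eq_Climb:
  "step q c = Climb j k \<Longrightarrow> (q = Col j \<and> c \<and> k = j) \<or> (q = Climb j (Suc k) \<and> c)"
  by (induction q c rule: step.induct) (auto split: if_splits)

lemma guided_state_Climb: "guided_state b p = Climb j k \<Longrightarrow> b j"
proof (induction p arbitrary: k)
  case (Suc p)
  from step_eq_Climb[OF Suc.prems[simplified]] show ?case
    using Suc.IH by (auto simp: choose_bit_def)
qed simp

lemma completed_spine_path: "completed (spine_path b) = {j. b j}"
proof (intro set_eqI iffI)
  fix j assume "j \<in> completed (spine_path b)"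
  then show "j \<in> {j. b j}" by (auto simp: completed_def run_state_spine_path intro: guided_state_Climb)
next
  fix j assume bj: "j \<in> {j. b j}"
  obtain p where "run_state (restr (spine_path b) p) = Col j"
    using Col_reached[OF spine_path_on_spine] by blast
  with bj have "run_state (restr (spine_path b) (Suc p)) = Climb j j"
    by (simp add: run_state_spine_path choose_bit_def)
  from Climb_completes[OF spine_path_on_spine this] show "j \<in> completed (spine_path b)"
    by (auto simp: completed_def)
qed

text \<open>The first p + 1 bits of the spine path only depend on b 0, \<dots>, b p.\<close>
lemma column_guided_state: "column (guided_state b p) \<le> p"
proof (induction p)
  case (Suc p)
  then show ?case
    using column_step_le[of "guided_state b p" "choose_bit b (guided_state b p)"] by simp
qed simp

lemma choose_bit_cong: "\<forall>i\<le>p. b i = b' i \<Longrightarrow> column q \<le> p \<Longrightarrow> choose_bit b q = choose_bit b' q"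
  by (cases q) (auto simp: choose_bit_def)

lemma guided_state_cong: "\<forall>i\<le>p. b i = b' i \<Longrightarrow> guided_state b p = guided_state b' p"
proof (induction p)
  case (Suc p)
  then have "guided_state b p = guided_state b' p" by simp
  moreover have "choose_bit b (guided_state b p) = choose_bit b' (guided_state b p)"
    using Suc.prems column_guided_state[of b p] by (intro choose_bit_cong[of "Suc p"]) auto
  ultimately show ?case by simp
qed simp

lemma spine_path_cong: "\<forall>i\<le>p. b i = b' i \<Longrightarrow> spine_path b p = spine_path b' p"
  using guided_state_cong[of p b b'] choose_bit_cong[of p b b' "guided_state b p"]
    column_guided_state[of b p] by (simp add: spine_path_def)

section \<open>\<Sigma>^0_2 sets via finitely many changes\<close>

definition first_hit :: "(nat \<Rightarrow> (nat \<Rightarrow> bool) set) \<Rightarrow> (nat \<Rightarrow> bool) \<Rightarrow> nat \<Rightarrow> nat" where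
  "first_hit F x k = (LEAST m. m = k \<or> (\<exists>i\<le>m. nbhd (restr x k) \<inter> F i \<noteq> {}))"

definition hit_change :: "(nat \<Rightarrow> (nat \<Rightarrow> bool) set) \<Rightarrow> (nat \<Rightarrow> bool) \<Rightarrow> nat \<Rightarrow> bool" where
  "hit_change F x k \<longleftrightarrow> first_hit F x (Suc k) \<noteq> first_hit F x k"

lemma first_hit_le: "first_hit F x k \<le> k"
  unfolding first_hit_def by (rule Least_le) simp

lemma first_hit_prop: "first_hit F x k = k \<or> (\<exists>i\<le>first_hit F x k. nbhd (restr x k) \<inter> F i \<noteq> {})"
  unfolding first_hit_def by (rule LeastI[of _ k]) simp

lemma first_hit_le_meets: "nbhd (restr x k) \<inter> F i \<noteq> {} \<Longrightarrow> first_hit F x k \<le> i"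
  unfolding first_hit_def by (rule Least_le) blast

lemma first_hit_le_mem: "x \<in> F i \<Longrightarrow> first_hit F x k \<le> i"
  by (rule first_hit_le_meets) (auto simp: mem_nbhd_restr)

lemma first_hit_mono: "mono (first_hit F x)"
  unfolding mono_iff_le_Suc
proof
  fix k
  from first_hit_prop[of F x "Suc k"] show "first_hit F x k \<le> first_hit F x (Suc k)"
  proof
    assume "first_hit F x (Suc k) = Suc k"
    then show ?thesis using first_hit_le[of F x k] by simp
  next
    assume "\<exists>i\<le>first_hit F x (Suc k). nbhd (restr x (Suc k)) \<inter> F i \<noteq> {}"
    then obtain i where i: "i \<le> first_hit F x (Suc k)" "nbhd (restr x (Suc k)) \<inter> F i \<noteq> {}"
      by blast
    have "nbhd (restr x (Suc k)) \<subseteq> nbhd (restr x k)" by (rule nbhd_restr_mono) simp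
    with i(2) have "first_hit F x k \<le> i" by (intro first_hit_le_meets) blast
    with i(1) show ?thesis by linarith
  qed
qed

lemma first_hit_cong: "restr x k = restr x' k \<Longrightarrow> first_hit F x k = first_hit F x' k"
  by (simp add: first_hit_def)

text \<open>If the first hit stays bounded by B, then for large k the cylinder N_(x|k) meets one
  of the finitely many closed sets F 0, \<dots>, F B; so x lies in one of them.\<close>
lemma first_hit_bounded_imp_mem:
  assumes closed: "\<And>i. closedin cantor_top (F i)" and B: "\<forall>k. first_hit F x k \<le> B"
  shows "\<exists>i. x \<in> F i"
proof (rule ccontr)
  assume "\<not> (\<exists>i. x \<in> F i)"
  then have "\<forall>i. \<exists>k. nbhd (restr x k) \<inter> F i = {}" using closedin_avoids_nbhd_restr closed by blast
  then obtain kf where kf: "\<And>i. nbhd (restr x (kf i)) \<inter> F i = {}" by metis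
  define K where "K = max (Suc B) (Max (kf ` {..B}))"
  have avoid: "nbhd (restr x K) \<inter> F i = {}" if "i \<le> B" for i
  proof -
    have "kf i \<le> Max (kf ` {..B})" using that by (auto intro!: Max_ge)
    then have "kf i \<le> K" by (simp add: K_def)
    then show ?thesis using kf[of i] nbhd_restr_mono[of "kf i" K x] by blast
  qed
  have "first_hit F x K \<le> B" using B by blast
  moreover have "B < K" by (simp add: K_def)
  ultimately obtain i where "i \<le> first_hit F x K" "nbhd (restr x K) \<inter> F i \<noteq> {}"
    using first_hit_prop[of F x K] by auto
  then show False using avoid \<open>first_hit F x K \<le> B\<close> by (meson order_trans)
qed

lemma mono_finite_changes_iff_bounded:
  fixes f :: "nat \<Rightarrow> nat"
  assumes "mono f"
  shows "finite {k. f (Suc k) \<noteq> f k} \<longleftrightarrow> (\<exists>B. \<forall>k. f k \<le> B)"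
proof
  assume "finite {k. f (Suc k) \<noteq> f k}"
  then obtain K where K: "{k. f (Suc k) \<noteq> f k} \<subseteq> {..<K}" using finite_nat_bounded by blast
  have const: "f k = f K" if "K \<le> k" for k
    using that
  proof (induction k rule: dec_induct)
    case (step k)
    then have "k \<notin> {..<K}" by simp
    then have "f (Suc k) = f k" using K by blast
    with step.IH show ?case by simp
  qed simp
  have "f k \<le> max K (f K)" for k
  proof (cases "K \<le> k")
    case True then show ?thesis using const[OF True] by simp
  next
    case False then have "f k \<le> f K" by (intro monoD[OF assms]) simp
    then show ?thesis by simp
  qed
  then show "\<exists>B. \<forall>k. f k \<le> B" by blast
next
  assume "\<exists>B. \<forall>k. f k \<le> B"
  then obtain B where "\<forall>k. f k \<le> B" by blast
  then have "range f \<subseteq> {..B}" by auto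
  then have fin: "finite (range f)" using finite_subset by blast
  have "Max (range f) \<in> range f" using fin by (intro Max_in) auto
  then obtain K where K: "f K = Max (range f)" by auto
  have const: "f k = f K" if "K \<le> k" for k
    using monoD[OF assms that] K Max_ge[OF fin, of "f k"] by simp
  have "{k. f (Suc k) \<noteq> f k} \<subseteq> {..<K}"
  proof
    fix k assume k: "k \<in> {k. f (Suc k) \<noteq> f k}"
    show "k \<in> {..<K}"
    proof (rule ccontr)
      assume "k \<notin> {..<K}"
      then have "K \<le> k" by simp
      then show False using k const[of k] const[of "Suc k"] by simp
    qed
  qed
  then show "finite {k. f (Suc k) \<noteq> f k}" using finite_subset by blast
qed

lemma mem_Union_closed_iff_finite_changes:
  assumes "\<And>i. closedin cantor_top (F i)"
  shows "(\<exists>i. x \<in> F i) \<longleftrightarrow> finite {k. hit_change F x k}"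
proof -
  have "finite {k. hit_change F x k} \<longleftrightarrow> (\<exists>B. \<forall>k. first_hit F x k \<le> B)"
    unfolding hit_change_def by (rule mono_finite_changes_iff_bounded[OF first_hit_mono])
  moreover have "(\<exists>B. \<forall>k. first_hit F x k \<le> B) \<longleftrightarrow> (\<exists>i. x \<in> F i)"
  proof
    assume "\<exists>B. \<forall>k. first_hit F x k \<le> B"
    then obtain B where "\<forall>k. first_hit F x k \<le> B" by blast
    then show "\<exists>i. x \<in> F i" by (rule first_hit_bounded_imp_mem[OF assms])
  next
    assume "\<exists>i. x \<in> F i"
    then obtain i where "x \<in> F i" by blast
    then have "\<forall>k. first_hit F x k \<le> i" by (simp add: first_hit_le_mem)
    then show "\<exists>B. \<forall>k. first_hit F x k \<le> B" by blast
  qed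
  ultimately show ?thesis by simp
qed

section \<open>Reducing \<Pi>^0_3 sets to \<Phi>(U)\<close>

definition change_code :: "(nat \<Rightarrow> nat \<Rightarrow> (nat \<Rightarrow> bool) set) \<Rightarrow> (nat \<Rightarrow> bool) \<Rightarrow> nat \<Rightarrow> bool" where
  "change_code F x j = hit_change (F (row j)) x (snd (prod_decode j))"

lemma change_code_row:
  "{j. change_code F x j \<and> row j = n} = (\<lambda>k. prod_encode (n, k)) ` {k. hit_change (F n) x k}"
proof (intro set_eqI iffI)
  fix j assume j: "j \<in> {j. change_code F x j \<and> row j = n}"
  then have "prod_decode j = (n, snd (prod_decode j))" by (simp add: row_def prod_eq_iff)
  then have "j = prod_encode (n, snd (prod_decode j))" by (metis prod_decode_inverse)
  then show "j \<in> (\<lambda>k. prod_encode (n, k)) ` {k. hit_change (F n) x k}"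
    using j by (auto simp: change_code_def row_def)
qed (auto simp: change_code_def row_def)

lemma finite_change_code_row:
  "finite {j. change_code F x j \<and> row j = n} \<longleftrightarrow> finite {k. hit_change (F n) x k}"
proof -
  have "inj (\<lambda>k. prod_encode (n, k))" by (auto intro!: injI simp: prod_encode_eq)
  then show ?thesis
    unfolding change_code_row by (simp add: finite_image_iff inj_on_subset[OF _ subset_UNIV])
qed

text \<open>Bit j of the code depends on x|(j + 1), since the column index of j is at most j.\<close>
lemma change_code_cong:
  assumes "restr x (Suc j) = restr x' (Suc j)"
  shows "change_code F x j = change_code F x' j"
proof -
  let ?k = "snd (prod_decode j)"
  have "?k \<le> prod_encode (prod_decode j)"
    by (cases "prod_decode j") (simp add: le_prod_encode_2)
  then have "?k \<le> j" by simp
  then have "restr x ?k = restr x' ?k" "restr x (Suc ?k) = restr x' (Suc ?k)"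
    using assms by (auto simp: restr_eq_iff)
  then have "first_hit G x ?k = first_hit G x' ?k"
    "first_hit G x (Suc ?k) = first_hit G x' (Suc ?k)" for G
    by (blast intro: first_hit_cong)+
  then show ?thesis unfolding change_code_def hit_change_def by simp
qed

lemma continuous_reduction: "continuous_map cantor_top cantor_top (\<lambda>x. spine_path (change_code F x))"
proof (rule continuous_map_cantor_finitely_determined)
  fix p
  have "spine_path (change_code F x) p = spine_path (change_code F x') p"
    if "restr x (Suc p) = restr x' (Suc p)" for x x'
    using that by (intro spine_path_cong allI impI change_code_cong) (auto simp: restr_eq_iff)
  then show "\<exists>N. \<forall>x x'. restr x N = restr x' N \<longrightarrow>
      spine_path (change_code F x) p = spine_path (change_code F x') p" by blast
qed

lemma Pi03_reduces_to_density_pts_Uset: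
  assumes "Pi03 Y"
  shows "\<exists>f. continuous_map cantor_top cantor_top f \<and> Y = f -` density_pts Uset"
proof -
  obtain F :: "nat \<Rightarrow> nat \<Rightarrow> (nat \<Rightarrow> bool) set"
    where closed: "\<forall>n m. closedin cantor_top (F n m)" and Y: "Y = (\<Inter>n. \<Union>m. F n m)"
    using assms unfolding Pi03_def by blast
  have "x \<in> Y \<longleftrightarrow> spine_path (change_code F x) \<in> density_pts Uset" for x
  proof -
    have row_iff: "(\<exists>i. x \<in> F n i) \<longleftrightarrow> finite {k. hit_change (F n) x k}" for n
      by (rule mem_Union_closed_iff_finite_changes) (use closed in blast)
    have "x \<in> Y \<longleftrightarrow> (\<forall>n. \<exists>i. x \<in> F n i)" using Y by simp
    also have "\<dots> \<longleftrightarrow> (\<forall>n. finite {k. hit_change (F n) x k})" by (simp add: row_iff)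
    also have "\<dots> \<longleftrightarrow> rows_finite (spine_path (change_code F x))"
      by (simp add: rows_finite_def completed_spine_path finite_change_code_row)
    also have "\<dots> \<longleftrightarrow> spine_path (change_code F x) \<in> density_pts Uset"
      by (simp add: density_pts_rel_dens[OF Uset_sets]
          between_U.density_iff_rows_finite[OF spine_path_on_spine])
    finally show ?thesis .
  qed
  then have "Y = (\<lambda>x. spine_path (change_code F x)) -` density_pts Uset" by auto
  then show ?thesis using continuous_reduction by blast
qed

theorem theorem1p2:
  shows "\<exists>U C. openin cantor_top U \<and> closedin cantor_top C \<and>
           density_pts U = density_pts C \<and> complete_Pi03 (density_pts U)"
proof (intro exI conjI)
  show "openin cantor_top Uset" by (rule Uset_open)
  show "closedin cantor_top Cset" by (rule Cset_closed)
  show "density_pts Uset = density_pts Cset" by (rule density_pts_Uset_Cset)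
  show "complete_Pi03 (density_pts Uset)"
    unfolding complete_Pi03_def
    using Pi03_density_pts[OF Uset_sets] Pi03_reduces_to_density_pts_Uset by blast
qed

end
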